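(* Let $r:M\to M'$ be an epimorphism and $s:N'\to N$ a monomorphism in an abelian category $\mathcal{A}$. (1) If $N$ is strongly $M$-Rickart, then $N'$ is strongly $M'$-Rickart. (2) If $N$ is dual strongly $M$-Rickart, then $N'$ is dual strongly $M'$-Rickart.
   Context: A morphism $f:X\to Y$ is a section if $f'f=1_X$ for some $f'$, a retraction if $ff'=1_Y$ for some $f'$. A monomorphism $k:K\to X$ is fully invariant if for every $h:X\to X$ there is $\alpha:K\to K$ with $hk=k\alpha$; an epimorphism $c:X\to C$ is fully coinvariant if for every $h:X\to X$ there is $\gamma:C\to C$ with $ch=\gamma c$. For objects $M,N$: $N$ is strongly $M$-Rickart if the kernel ${\rm ker}(f)$ of every morphism $f:M\to N$ is a fully invariant section (of $M$); $N$ is dual strongly $M$-Rickart if the cokernel ${\rm coker}(f)$ of every morphism $f:M\to N$ is a fully coinvariant retraction (equivalently the image of $f$ is a fully invariant section of $N$). *)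

theory Defs
  imports Main
begin

text \<open>An abstract (small-data) category with additive structure, given by
  a set of objects, a set of morphisms, domain, codomain, identities,
  composition (comp g f = g after f), and hom-wise addition, negation and
  zero morphisms.\<close>

record ('o, 'm) acat =
  Obj  :: "'o set"
  Mor  :: "'m set"
  dom  :: "'m \<Rightarrow> 'o"
  cod  :: "'m \<Rightarrow> 'o"
  idm  :: "'o \<Rightarrow> 'm"
  comp :: "'m \<Rightarrow> 'm \<Rightarrow> 'm"
  add  :: "'m \<Rightarrow> 'm \<Rightarrow> 'm"
  neg  :: "'m \<Rightarrow> 'm"
  zero :: "'o \<Rightarrow> 'o \<Rightarrow> 'm"

definition hom :: "('o, 'm) acat \<Rightarrow> 'o \<Rightarrow> 'o \<Rightarrow> 'm set" where
  "hom C a b = {f \<in> Mor C. dom C f = a \<and> cod C f = b}"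

definition category :: "('o, 'm) acat \<Rightarrow> bool" where
  "category C \<longleftrightarrow>
     (\<forall>f \<in> Mor C. dom C f \<in> Obj C \<and> cod C f \<in> Obj C) \<and>
     (\<forall>a \<in> Obj C. idm C a \<in> hom C a a) \<and>
     (\<forall>f \<in> Mor C. \<forall>g \<in> Mor C. cod C f = dom C g \<longrightarrow>
         comp C g f \<in> hom C (dom C f) (cod C g)) \<and>
     (\<forall>f \<in> Mor C. comp C f (idm C (dom C f)) = f \<and> comp C (idm C (cod C f)) f = f) \<and>
     (\<forall>f \<in> Mor C. \<forall>g \<in> Mor C. \<forall>h \<in> Mor C.
         cod C f = dom C g \<and> cod C g = dom C h \<longrightarrow>
         comp C h (comp C g f) = comp C (comp C h g) f)"

definition preadditive :: "('o, 'm) acat \<Rightarrow> bool" where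
  "preadditive C \<longleftrightarrow>
     (\<forall>a \<in> Obj C. \<forall>b \<in> Obj C.
        zero C a b \<in> hom C a b \<and>
        (\<forall>f \<in> hom C a b. \<forall>g \<in> hom C a b. add C f g \<in> hom C a b) \<and>
        (\<forall>f \<in> hom C a b. neg C f \<in> hom C a b) \<and>
        (\<forall>f \<in> hom C a b. \<forall>g \<in> hom C a b. \<forall>h \<in> hom C a b.
            add C (add C f g) h = add C f (add C g h)) \<and>
        (\<forall>f \<in> hom C a b. \<forall>g \<in> hom C a b. add C f g = add C g f) \<and>
        (\<forall>f \<in> hom C a b. add C f (zero C a b) = f) \<and>
        (\<forall>f \<in> hom C a b. add C f (neg C f) = zero C a b)) \<and>
     (\<forall>a \<in> Obj C. \<forall>b \<in> Obj C. \<forall>c \<in> Obj C. \<forall>f \<in> hom C a b.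
        \<forall>g \<in> hom C b c. \<forall>g' \<in> hom C b c.
          comp C (add C g g') f = add C (comp C g f) (comp C g' f)) \<and>
     (\<forall>a \<in> Obj C. \<forall>b \<in> Obj C. \<forall>c \<in> Obj C. \<forall>g \<in> hom C a b.
        \<forall>g' \<in> hom C a b. \<forall>h \<in> hom C b c.
          comp C h (add C g g') = add C (comp C h g) (comp C h g'))"

definition has_zero_object :: "('o, 'm) acat \<Rightarrow> bool" where
  "has_zero_object C \<longleftrightarrow>
     (\<exists>z \<in> Obj C. \<forall>a \<in> Obj C. (\<exists>!f. f \<in> hom C z a) \<and> (\<exists>!f. f \<in> hom C a z))"

definition has_binary_products :: "('o, 'm) acat \<Rightarrow> bool" where
  "has_binary_products C \<longleftrightarrow>
     (\<forall>a \<in> Obj C. \<forall>b \<in> Obj C. \<exists>p \<in> Obj C. \<exists>p1 \<in> hom C p a. \<exists>p2 \<in> hom C p b.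
        \<forall>c \<in> Obj C. \<forall>f \<in> hom C c a. \<forall>g \<in> hom C c b.
          \<exists>!u. u \<in> hom C c p \<and> comp C p1 u = f \<and> comp C p2 u = g)"

definition is_mono :: "('o, 'm) acat \<Rightarrow> 'm \<Rightarrow> bool" where
  "is_mono C m \<longleftrightarrow> m \<in> Mor C \<and>
     (\<forall>g \<in> Mor C. \<forall>h \<in> Mor C. cod C g = dom C m \<and> cod C h = dom C m \<and>
        dom C g = dom C h \<and> comp C m g = comp C m h \<longrightarrow> g = h)"

definition is_epi :: "('o, 'm) acat \<Rightarrow> 'm \<Rightarrow> bool" where
  "is_epi C e \<longleftrightarrow> e \<in> Mor C \<and>
     (\<forall>g \<in> Mor C. \<forall>h \<in> Mor C. dom C g = cod C e \<and> dom C h = cod C e \<and>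
        cod C g = cod C h \<and> comp C g e = comp C h e \<longrightarrow> g = h)"

definition is_kernel :: "('o, 'm) acat \<Rightarrow> 'm \<Rightarrow> 'm \<Rightarrow> bool" where
  "is_kernel C k f \<longleftrightarrow> f \<in> Mor C \<and> k \<in> Mor C \<and> cod C k = dom C f \<and>
     comp C f k = zero C (dom C k) (cod C f) \<and>
     (\<forall>g \<in> Mor C. cod C g = dom C f \<and> comp C f g = zero C (dom C g) (cod C f) \<longrightarrow>
        (\<exists>!u. u \<in> hom C (dom C g) (dom C k) \<and> comp C k u = g))"

definition is_cokernel :: "('o, 'm) acat \<Rightarrow> 'm \<Rightarrow> 'm \<Rightarrow> bool" where
  "is_cokernel C c f \<longleftrightarrow> f \<in> Mor C \<and> c \<in> Mor C \<and> dom C c = cod C f \<and>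
     comp C c f = zero C (dom C f) (cod C c) \<and>
     (\<forall>g \<in> Mor C. dom C g = cod C f \<and> comp C g f = zero C (dom C f) (cod C g) \<longrightarrow>
        (\<exists>!u. u \<in> hom C (cod C c) (cod C g) \<and> comp C u c = g))"

definition abelian :: "('o, 'm) acat \<Rightarrow> bool" where
  "abelian C \<longleftrightarrow> category C \<and> preadditive C \<and> has_zero_object C \<and>
     has_binary_products C \<and>
     (\<forall>f \<in> Mor C. (\<exists>k. is_kernel C k f) \<and> (\<exists>c. is_cokernel C c f)) \<and>
     (\<forall>m. is_mono C m \<longrightarrow> (\<exists>f. is_kernel C m f)) \<and>
     (\<forall>e. is_epi C e \<longrightarrow> (\<exists>f. is_cokernel C e f))"

definition is_section :: "('o, 'm) acat \<Rightarrow> 'm \<Rightarrow> bool" where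
  "is_section C f \<longleftrightarrow> f \<in> Mor C \<and>
     (\<exists>f' \<in> hom C (cod C f) (dom C f). comp C f' f = idm C (dom C f))"

definition is_retraction :: "('o, 'm) acat \<Rightarrow> 'm \<Rightarrow> bool" where
  "is_retraction C f \<longleftrightarrow> f \<in> Mor C \<and>
     (\<exists>f' \<in> hom C (cod C f) (dom C f). comp C f f' = idm C (cod C f))"

definition fully_invariant :: "('o, 'm) acat \<Rightarrow> 'm \<Rightarrow> bool" where
  "fully_invariant C k \<longleftrightarrow> is_mono C k \<and>
     (\<forall>h \<in> hom C (cod C k) (cod C k). \<exists>\<alpha> \<in> hom C (dom C k) (dom C k).
        comp C h k = comp C k \<alpha>)"

definition fully_coinvariant :: "('o, 'm) acat \<Rightarrow> 'm \<Rightarrow> bool" where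
  "fully_coinvariant C c \<longleftrightarrow> is_epi C c \<and>
     (\<forall>h \<in> hom C (dom C c) (dom C c). \<exists>\<gamma> \<in> hom C (cod C c) (cod C c).
        comp C c h = comp C \<gamma> c)"

definition strongly_rickart :: "('o, 'm) acat \<Rightarrow> 'o \<Rightarrow> 'o \<Rightarrow> bool" where
  "strongly_rickart C M N \<longleftrightarrow>
     (\<forall>f \<in> hom C M N. \<forall>k. is_kernel C k f \<longrightarrow> is_section C k \<and> fully_invariant C k)"

definition dual_strongly_rickart :: "('o, 'm) acat \<Rightarrow> 'o \<Rightarrow> 'o \<Rightarrow> bool" where
  "dual_strongly_rickart C M N \<longleftrightarrow>
     (\<forall>f \<in> hom C M N. \<forall>c. is_cokernel C c f \<longrightarrow> is_retraction C c \<and> fully_coinvariant C c)"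

end

theory Submission
  imports Defs
begin

text \<open>Part (1) only needs a preadditive category with kernels in which every epimorphism is a
  cokernel; part (2) is part (1) in the opposite category. Let \<open>f : M' \<rightarrow> N'\<close>. Composing with the
  mono \<open>s\<close> does not change kernels, so \<open>K = ker (f r)\<close> is a fully invariant direct summand of \<open>M\<close>,
  \<open>M = K \<oplus> L\<close> with projection \<open>\<pi> : M \<rightarrow> L\<close>. As \<open>ker r \<subseteq> K\<close> and \<open>r\<close> is a cokernel, \<open>\<pi>\<close> factors
  as \<open>\<sigma> r\<close>. Now \<open>\<sigma>\<close> is split by \<open>r l\<close> and \<open>f = (f r l) \<sigma>\<close> with \<open>f r l\<close> mono, so \<open>ker f = ker \<sigma>\<close> is a
  direct summand of \<open>M'\<close>. It is fully invariant because \<open>Hom(K, L) = 0\<close> for a fully invariant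
  summand \<open>K\<close> with complement \<open>L\<close>.\<close>

section \<open>Preadditive categories\<close>

locale preadditive_kernels_normal_epis =
  fixes C :: "('o, 'm) acat"
  assumes category: "category C"
    and preadditive: "preadditive C"
    and kernel_exists: "f \<in> Mor C \<Longrightarrow> \<exists>k. is_kernel C k f"
    and epi_is_cokernel: "is_epi C e \<Longrightarrow> \<exists>f. is_cokernel C e f"
begin

abbreviation compose (infixr "\<cdot>" 75) where "g \<cdot> f \<equiv> comp C g f"

lemma dom_in_Obj [simp]: "f \<in> Mor C \<Longrightarrow> dom C f \<in> Obj C"
  and cod_in_Obj [simp]: "f \<in> Mor C \<Longrightarrow> cod C f \<in> Obj C"
  using category unfolding category_def by auto

lemma comp_in_Mor [simp]: "f \<in> Mor C \<Longrightarrow> g \<in> Mor C \<Longrightarrow> cod C f = dom C g \<Longrightarrow> g \<cdot> f \<in> Mor C"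
  and dom_comp [simp]: "f \<in> Mor C \<Longrightarrow> g \<in> Mor C \<Longrightarrow> cod C f = dom C g \<Longrightarrow> dom C (g \<cdot> f) = dom C f"
  and cod_comp [simp]: "f \<in> Mor C \<Longrightarrow> g \<in> Mor C \<Longrightarrow> cod C f = dom C g \<Longrightarrow> cod C (g \<cdot> f) = cod C g"
  using category unfolding category_def hom_def by auto

lemma comp_assoc [simp]:
  "f \<in> Mor C \<Longrightarrow> g \<in> Mor C \<Longrightarrow> h \<in> Mor C \<Longrightarrow> cod C f = dom C g \<Longrightarrow> cod C g = dom C h \<Longrightarrow>
   (h \<cdot> g) \<cdot> f = h \<cdot> g \<cdot> f"
  using category unfolding category_def by metis

lemma idm_in_Mor [simp]: "a \<in> Obj C \<Longrightarrow> idm C a \<in> Mor C"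
  and dom_idm [simp]: "a \<in> Obj C \<Longrightarrow> dom C (idm C a) = a"
  and cod_idm [simp]: "a \<in> Obj C \<Longrightarrow> cod C (idm C a) = a"
  using category unfolding category_def hom_def by auto

lemma comp_idm_right [simp]: "f \<in> Mor C \<Longrightarrow> dom C f = a \<Longrightarrow> f \<cdot> idm C a = f"
  and comp_idm_left [simp]: "f \<in> Mor C \<Longrightarrow> cod C f = b \<Longrightarrow> idm C b \<cdot> f = f"
  using category unfolding category_def by auto

lemma idm_in_hom: "a \<in> Obj C \<Longrightarrow> idm C a \<in> hom C a a"
  by (simp add: hom_def)

lemma comp_in_hom: "f \<in> hom C a b \<Longrightarrow> g \<in> hom C b c \<Longrightarrow> g \<cdot> f \<in> hom C a c"
  by (simp add: hom_def)

text \<open>Simplification with \<open>comp_assoc\<close> nests composites to the right, so an equation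
  \<open>g \<cdot> f = e\<close> only applies at the end of a composite; this lemma applies it at the front.\<close>

lemma comp_reassoc:
  assumes "g \<cdot> f = e" "f \<in> hom C a b" "g \<in> hom C b c" "h \<in> Mor C" "cod C h = a"
  shows "g \<cdot> f \<cdot> h = e \<cdot> h"
  using assms by (simp add: hom_def flip: assms(1))

lemma hom_objs: "f \<in> hom C a b \<Longrightarrow> a \<in> Obj C \<and> b \<in> Obj C"
  by (auto simp: hom_def)

lemma hom_group:
  assumes "a \<in> Obj C" "b \<in> Obj C"
  shows "zero C a b \<in> hom C a b \<and>
    (\<forall>f\<in>hom C a b. \<forall>g\<in>hom C a b. add C f g \<in> hom C a b) \<and>
    (\<forall>f\<in>hom C a b. neg C f \<in> hom C a b) \<and>
    (\<forall>f\<in>hom C a b. \<forall>g\<in>hom C a b. \<forall>h\<in>hom C a b. add C (add C f g) h = add C f (add C g h)) \<and>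
    (\<forall>f\<in>hom C a b. \<forall>g\<in>hom C a b. add C f g = add C g f) \<and>
    (\<forall>f\<in>hom C a b. add C f (zero C a b) = f) \<and>
    (\<forall>f\<in>hom C a b. add C f (neg C f) = zero C a b)"
  by (rule bspec[OF bspec[OF preadditive[unfolded preadditive_def, THEN conjunct1] assms(1)] assms(2)])

lemma zero_in_hom: "a \<in> Obj C \<Longrightarrow> b \<in> Obj C \<Longrightarrow> zero C a b \<in> hom C a b"
  using hom_group[of a b] by blast

lemma add_in_hom: "f \<in> hom C a b \<Longrightarrow> g \<in> hom C a b \<Longrightarrow> add C f g \<in> hom C a b"
  using hom_group[of a b] hom_objs[of f a b] by blast

lemma neg_in_hom: "f \<in> hom C a b \<Longrightarrow> neg C f \<in> hom C a b"
  using hom_group[of a b] hom_objs[of f a b] by blast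

lemma zero_in_Mor [simp]: "a \<in> Obj C \<Longrightarrow> b \<in> Obj C \<Longrightarrow> zero C a b \<in> Mor C"
  and dom_zero [simp]: "a \<in> Obj C \<Longrightarrow> b \<in> Obj C \<Longrightarrow> dom C (zero C a b) = a"
  and cod_zero [simp]: "a \<in> Obj C \<Longrightarrow> b \<in> Obj C \<Longrightarrow> cod C (zero C a b) = b"
  using zero_in_hom unfolding hom_def by blast+

lemma add_in_Mor [simp]:
    "f \<in> Mor C \<Longrightarrow> g \<in> Mor C \<Longrightarrow> dom C g = dom C f \<Longrightarrow> cod C g = cod C f \<Longrightarrow> add C f g \<in> Mor C"
  and dom_add [simp]:
    "f \<in> Mor C \<Longrightarrow> g \<in> Mor C \<Longrightarrow> dom C g = dom C f \<Longrightarrow> cod C g = cod C f \<Longrightarrow> dom C (add C f g) = dom C f"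
  and cod_add [simp]:
    "f \<in> Mor C \<Longrightarrow> g \<in> Mor C \<Longrightarrow> dom C g = dom C f \<Longrightarrow> cod C g = cod C f \<Longrightarrow> cod C (add C f g) = cod C f"
  using add_in_hom[of f "dom C f" "cod C f" g] unfolding hom_def by auto

lemma add_assoc:
  "f \<in> hom C a b \<Longrightarrow> g \<in> hom C a b \<Longrightarrow> h \<in> hom C a b \<Longrightarrow> add C (add C f g) h = add C f (add C g h)"
  using hom_group[of a b] hom_objs[of f a b] by blast

lemma add_comm: "f \<in> hom C a b \<Longrightarrow> g \<in> hom C a b \<Longrightarrow> add C f g = add C g f"
  using hom_group[of a b] hom_objs[of f a b] by blast

lemma add_zero: "f \<in> hom C a b \<Longrightarrow> add C f (zero C a b) = f"
  using hom_group[of a b] hom_objs[of f a b] by blast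

lemma add_neg: "f \<in> hom C a b \<Longrightarrow> add C f (neg C f) = zero C a b"
  using hom_group[of a b] hom_objs[of f a b] by blast

lemma neg_add: "f \<in> hom C a b \<Longrightarrow> add C (neg C f) f = zero C a b"
  using add_comm[OF neg_in_hom] add_neg by simp

lemma zero_add: "f \<in> hom C a b \<Longrightarrow> add C (zero C a b) f = f"
  using add_comm[OF zero_in_hom] add_zero hom_objs by simp

lemma comp_add_right:
  assumes "f \<in> hom C a b" "g \<in> hom C b c" "g' \<in> hom C b c"
  shows "add C g g' \<cdot> f = add C (g \<cdot> f) (g' \<cdot> f)"
  using preadditive[unfolded preadditive_def, THEN conjunct2, THEN conjunct1, rule_format]
    hom_objs[OF assms(1)] hom_objs[OF assms(2)] assms by blast

lemma comp_add_left:
  assumes "g \<in> hom C a b" "g' \<in> hom C a b" "h \<in> hom C b c"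
  shows "h \<cdot> add C g g' = add C (h \<cdot> g) (h \<cdot> g')"
  using preadditive[unfolded preadditive_def, THEN conjunct2, THEN conjunct2, rule_format]
    hom_objs[OF assms(1)] hom_objs[OF assms(3)] assms by blast

lemma add_right_cancel:
  assumes "f \<in> hom C a b" "g \<in> hom C a b" "h \<in> hom C a b" and "add C f h = add C g h"
  shows "f = g"
proof -
  have "f = add C (add C f h) (neg C h)"
    using add_assoc[OF assms(1,3) neg_in_hom] add_neg add_zero assms by simp
  also have "\<dots> = g"
    using add_assoc[OF assms(2,3) neg_in_hom] add_neg add_zero assms by simp
  finally show ?thesis .
qed

lemma add_left_eq_self:
  assumes "f \<in> hom C a b" "g \<in> hom C a b" "add C f g = g" shows "f = zero C a b"
proof (rule add_right_cancel[OF assms(1) _ assms(2)])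
  show "zero C a b \<in> hom C a b" using zero_in_hom hom_objs assms(1) by blast
  show "add C f g = add C (zero C a b) g" using zero_add assms by simp
qed

lemma comp_zero [simp]:
  assumes "h \<in> Mor C" "dom C h = b" "a \<in> Obj C" shows "h \<cdot> zero C a b = zero C a (cod C h)"
proof -
  have h: "h \<in> hom C b (cod C h)" using assms by (simp add: hom_def)
  have z: "zero C a b \<in> hom C a b" using zero_in_hom hom_objs h assms by blast
  have "add C (h \<cdot> zero C a b) (h \<cdot> zero C a b) = h \<cdot> zero C a b"
    using comp_add_left[OF z z h] add_zero[OF z] by simp
  then show ?thesis using add_left_eq_self comp_in_hom z h by blast
qed

lemma zero_comp [simp]:
  assumes "f \<in> Mor C" "cod C f = b" "c \<in> Obj C" shows "zero C b c \<cdot> f = zero C (dom C f) c"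
proof -
  have f: "f \<in> hom C (dom C f) b" using assms by (simp add: hom_def)
  have z: "zero C b c \<in> hom C b c" using zero_in_hom hom_objs f assms by blast
  have "add C (zero C b c \<cdot> f) (zero C b c \<cdot> f) = zero C b c \<cdot> f"
    using comp_add_right[OF f z z] add_zero[OF z] by simp
  then show ?thesis using add_left_eq_self comp_in_hom z f by blast
qed

lemma neg_zero [simp]: "a \<in> Obj C \<Longrightarrow> b \<in> Obj C \<Longrightarrow> neg C (zero C a b) = zero C a b"
  using zero_add[OF neg_in_hom[OF zero_in_hom]] add_neg[OF zero_in_hom] by simp

lemma comp_neg: assumes "g \<in> hom C a b" "h \<in> hom C b c" shows "h \<cdot> neg C g = neg C (h \<cdot> g)"
proof (rule add_right_cancel)
  have "add C (h \<cdot> neg C g) (h \<cdot> g) = h \<cdot> zero C a b"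
    using comp_add_left[OF neg_in_hom[OF assms(1)] assms] neg_add[OF assms(1)] by simp
  also have "\<dots> = add C (neg C (h \<cdot> g)) (h \<cdot> g)"
    using assms hom_objs[OF assms(1)] hom_objs[OF assms(2)] neg_add[OF comp_in_hom[OF assms]]
    by (simp add: hom_def)
  finally show "add C (h \<cdot> neg C g) (h \<cdot> g) = add C (neg C (h \<cdot> g)) (h \<cdot> g)" .
qed (use assms comp_in_hom neg_in_hom in blast)+

lemma neg_comp: assumes "f \<in> hom C a b" "g \<in> hom C b c" shows "neg C g \<cdot> f = neg C (g \<cdot> f)"
proof (rule add_right_cancel)
  have "add C (neg C g \<cdot> f) (g \<cdot> f) = zero C b c \<cdot> f"
    using comp_add_right[OF assms(1) neg_in_hom[OF assms(2)] assms(2)] neg_add[OF assms(2)] by simp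
  also have "\<dots> = add C (neg C (g \<cdot> f)) (g \<cdot> f)"
    using assms hom_objs[OF assms(1)] hom_objs[OF assms(2)] neg_add[OF comp_in_hom[OF assms]]
    by (simp add: hom_def)
  finally show "add C (neg C g \<cdot> f) (g \<cdot> f) = add C (neg C (g \<cdot> f)) (g \<cdot> f)" .
qed (use assms comp_in_hom neg_in_hom in blast)+

section \<open>Kernels and cokernels\<close>

lemma mono_cancel:
  "is_mono C m \<Longrightarrow> m \<in> hom C b c \<Longrightarrow> g \<in> hom C a b \<Longrightarrow> h \<in> hom C a b \<Longrightarrow> m \<cdot> g = m \<cdot> h \<Longrightarrow> g = h"
  unfolding is_mono_def hom_def by auto

lemma epi_cancel:
  "is_epi C e \<Longrightarrow> e \<in> hom C a b \<Longrightarrow> g \<in> hom C b c \<Longrightarrow> h \<in> hom C b c \<Longrightarrow> g \<cdot> e = h \<cdot> e \<Longrightarrow> g = h"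
  unfolding is_epi_def hom_def by auto

lemma mono_comp_eq_zero:
  assumes "is_mono C m" "m \<in> hom C b c" "z \<in> hom C a b" "m \<cdot> z = zero C a c"
  shows "z = zero C a b"
  using assms hom_objs[OF assms(2)] hom_objs[OF assms(3)]
  by (intro mono_cancel[OF assms(1,2,3) zero_in_hom]) (auto simp: hom_def)

lemma mono_if_zero_kernel:
  assumes m: "m \<in> hom C b c"
    and zero_kernel: "\<And>a z. z \<in> hom C a b \<Longrightarrow> m \<cdot> z = zero C a c \<Longrightarrow> z = zero C a b"
  shows "is_mono C m"
  unfolding is_mono_def
proof (intro conjI ballI impI)
  show "m \<in> Mor C" using m by (simp add: hom_def)
  fix g h assume "g \<in> Mor C" "h \<in> Mor C"
    and eq: "cod C g = dom C m \<and> cod C h = dom C m \<and> dom C g = dom C h \<and> m \<cdot> g = m \<cdot> h"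
  then have g: "g \<in> hom C (dom C g) b" and h: "h \<in> hom C (dom C g) b"
    using m by (auto simp: hom_def)
  have "m \<cdot> add C g (neg C h) = add C (m \<cdot> h) (neg C (m \<cdot> h))"
    using comp_add_left[OF g neg_in_hom[OF h] m] comp_neg[OF h m] eq by simp
  then have "add C g (neg C h) = zero C (dom C g) b"
    using zero_kernel add_in_hom[OF g neg_in_hom[OF h]] add_neg comp_in_hom[OF h m] by simp
  then show "g = h"
    using add_right_cancel[OF g h neg_in_hom[OF h]] add_neg[OF h] by simp
qed

lemma kernelD:
  "is_kernel C k f \<Longrightarrow> f \<in> Mor C \<and> k \<in> Mor C \<and> cod C k = dom C f \<and> f \<cdot> k = zero C (dom C k) (cod C f)"
  unfolding is_kernel_def by blast

lemma kernel_in_hom: "is_kernel C k f \<Longrightarrow> f \<in> hom C a b \<Longrightarrow> k \<in> hom C (dom C k) a"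
  and kernel_comp: "is_kernel C k f \<Longrightarrow> f \<in> hom C a b \<Longrightarrow> f \<cdot> k = zero C (dom C k) b"
  using kernelD[of k f] unfolding hom_def by auto

lemma kernel_universal:
  assumes "is_kernel C k f" "f \<in> hom C a b" "g \<in> hom C x a" "f \<cdot> g = zero C x b"
  shows "\<exists>!u. u \<in> hom C x (dom C k) \<and> k \<cdot> u = g"
proof -
  have "\<forall>g \<in> Mor C. cod C g = dom C f \<and> f \<cdot> g = zero C (dom C g) (cod C f) \<longrightarrow>
      (\<exists>!u. u \<in> hom C (dom C g) (dom C k) \<and> k \<cdot> u = g)"
    using assms(1) unfolding is_kernel_def by (elim conjE)
  moreover have "g \<in> Mor C" "cod C g = dom C f" "dom C g = x" "cod C f = b"
    using assms(2,3) unfolding hom_def by auto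
  ultimately show ?thesis using assms(4) by blast
qed

lemma kernel_factor:
  assumes "is_kernel C k f" "f \<in> hom C a b" "k \<in> hom C K a" "g \<in> hom C x a" "f \<cdot> g = zero C x b"
  obtains u where "u \<in> hom C x K" "k \<cdot> u = g"
  using kernel_universal[OF assms(1,2,4,5)] assms(3) unfolding hom_def by blast

lemma kernel_mono: assumes k: "is_kernel C k f" shows "is_mono C k"
  unfolding is_mono_def
proof (intro conjI ballI impI)
  have f: "f \<in> hom C (cod C k) (cod C f)" and kh: "k \<in> hom C (dom C k) (cod C k)"
    using kernelD[OF k] unfolding hom_def by auto
  then show "k \<in> Mor C" by (simp add: hom_def)
  fix g h assume "g \<in> Mor C" "h \<in> Mor C"
    and eq: "cod C g = dom C k \<and> cod C h = dom C k \<and> dom C g = dom C h \<and> k \<cdot> g = k \<cdot> h"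
  then have g: "g \<in> hom C (dom C g) (dom C k)" and h: "h \<in> hom C (dom C g) (dom C k)"
    by (auto simp: hom_def)
  have "f \<cdot> k \<cdot> g = (f \<cdot> k) \<cdot> g"
    using f kh g by (simp add: hom_def)
  also have "\<dots> = zero C (dom C g) (cod C f)"
    using kernel_comp[OF k f] f g by (simp add: hom_def)
  finally have "f \<cdot> k \<cdot> g = zero C (dom C g) (cod C f)" .
  then have "\<exists>!u. u \<in> hom C (dom C g) (dom C k) \<and> k \<cdot> u = k \<cdot> g"
    using kernel_universal[OF k f comp_in_hom[OF g kh]] by simp
  then show "g = h"
    using g h eq by (elim ex1E) metis
qed

lemma is_kernelI:
  assumes "f \<in> hom C a b" "k \<in> hom C K a" "f \<cdot> k = zero C K b" "is_mono C k"
    and "\<And>x g. g \<in> hom C x a \<Longrightarrow> f \<cdot> g = zero C x b \<Longrightarrow> \<exists>u \<in> hom C x K. k \<cdot> u = g"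
  shows "is_kernel C k f"
  unfolding is_kernel_def
proof (intro conjI ballI impI)
  fix g assume "g \<in> Mor C" "cod C g = dom C f \<and> f \<cdot> g = zero C (dom C g) (cod C f)"
  then obtain u where "u \<in> hom C (dom C g) K" "k \<cdot> u = g"
    using assms(1) assms(5)[of g "dom C g"] by (auto simp: hom_def)
  then show "\<exists>!u. u \<in> hom C (dom C g) (dom C k) \<and> k \<cdot> u = g"
    using mono_cancel[OF assms(4,2)] assms(2) by (auto simp: hom_def)
qed (use assms in \<open>auto simp: hom_def\<close>)

lemma kernel_comp_mono_iff:
  assumes "is_mono C s" "s \<in> hom C b c" "g \<in> hom C a b"
  shows "is_kernel C k (s \<cdot> g) \<longleftrightarrow> is_kernel C k g"
proof
  have sg: "s \<cdot> g \<in> hom C a c" using comp_in_hom assms by blast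
  assume k: "is_kernel C k (s \<cdot> g)"
  note kh = kernel_in_hom[OF k sg]
  show "is_kernel C k g"
  proof (rule is_kernelI[OF assms(3) kh _ kernel_mono[OF k]])
    show "g \<cdot> k = zero C (dom C k) b"
      using mono_comp_eq_zero[OF assms(1,2) comp_in_hom[OF kh assms(3)]] kernel_comp[OF k sg]
        assms kh by (simp add: hom_def)
    fix x z assume "z \<in> hom C x a" "g \<cdot> z = zero C x b"
    then have "(s \<cdot> g) \<cdot> z = zero C x c"
      using assms hom_objs[OF \<open>z \<in> hom C x a\<close>] by (simp add: hom_def)
    then show "\<exists>u \<in> hom C x (dom C k). k \<cdot> u = z"
      using kernel_factor[OF k sg kh \<open>z \<in> hom C x a\<close>] by metis
  qed
next
  assume k: "is_kernel C k g"
  note kh = kernel_in_hom[OF k assms(3)]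
  show "is_kernel C k (s \<cdot> g)"
  proof (rule is_kernelI[OF comp_in_hom[OF assms(3,2)] kh _ kernel_mono[OF k]])
    show "(s \<cdot> g) \<cdot> k = zero C (dom C k) c"
      using kernel_comp[OF k assms(3)] assms kh hom_objs[OF kh] by (simp add: hom_def)
    fix x z assume z: "z \<in> hom C x a" "(s \<cdot> g) \<cdot> z = zero C x c"
    then have "g \<cdot> z = zero C x b"
      using mono_comp_eq_zero[OF assms(1,2) comp_in_hom[OF z(1) assms(3)]] assms by (simp add: hom_def)
    then show "\<exists>u \<in> hom C x (dom C k). k \<cdot> u = z"
      using kernel_factor[OF k assms(3) kh z(1)] by metis
  qed
qed

lemma cokernelD:
  "is_cokernel C q f \<Longrightarrow> f \<in> Mor C \<and> q \<in> Mor C \<and> dom C q = cod C f \<and> q \<cdot> f = zero C (dom C f) (cod C q)"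
  unfolding is_cokernel_def by blast

lemma cokernel_factor:
  assumes "is_cokernel C q f" "f \<in> hom C a b" "q \<in> hom C b Q" "g \<in> hom C b y" "g \<cdot> f = zero C a y"
  obtains u where "u \<in> hom C Q y" "u \<cdot> q = g"
proof -
  have "\<forall>g \<in> Mor C. dom C g = cod C f \<and> g \<cdot> f = zero C (dom C f) (cod C g) \<longrightarrow>
      (\<exists>!u. u \<in> hom C (cod C q) (cod C g) \<and> u \<cdot> q = g)"
    using assms(1) unfolding is_cokernel_def by (elim conjE)
  moreover have "g \<in> Mor C" "dom C g = cod C f" "cod C g = y" "dom C f = a"
    using assms(2,4) unfolding hom_def by auto
  ultimately show ?thesis using that assms(3,5) unfolding hom_def by blast
qed

section \<open>Direct summands\<close>

lemma kernel_of_retraction_complement: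
  assumes \<sigma>: "\<sigma> \<in> hom C A B" and j: "j \<in> hom C B A" and \<sigma>j: "\<sigma> \<cdot> j = idm C B"
    and k: "is_kernel C k \<sigma>" "k \<in> hom C K A"
  obtains k' where "k' \<in> hom C A K" "k' \<cdot> k = idm C K" "k' \<cdot> j = zero C B K"
    "add C (k \<cdot> k') (j \<cdot> \<sigma>) = idm C A"
proof -
  have objs: "A \<in> Obj C" "B \<in> Obj C" "K \<in> Obj C" using hom_objs \<sigma> k(2) by blast+
  have j\<sigma>: "j \<cdot> \<sigma> \<in> hom C A A" using comp_in_hom \<sigma> j by blast
  define d where "d = add C (idm C A) (neg C (j \<cdot> \<sigma>))"
  have d: "d \<in> hom C A A" unfolding d_def using add_in_hom neg_in_hom j\<sigma> objs by (simp add: hom_def)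
  have "\<sigma> \<cdot> d = add C \<sigma> (neg C \<sigma>)"
    unfolding d_def using comp_add_left[OF _ neg_in_hom[OF j\<sigma>] \<sigma>] comp_neg[OF j\<sigma> \<sigma>] \<sigma> j objs
    by (simp add: hom_def comp_reassoc[OF \<sigma>j j \<sigma>])
  then obtain k' where k': "k' \<in> hom C A K" and kk': "k \<cdot> k' = d"
    using kernel_factor[OF k(1) \<sigma> k(2) d] add_neg[OF \<sigma>] kernel_in_hom[OF k(1) \<sigma>] k(2)
    by (auto simp: hom_def)
  have "k \<cdot> k' \<cdot> k = d \<cdot> k" using comp_reassoc[OF kk' k' k(2)] k(2) by (simp add: hom_def)
  also have "\<dots> = k \<cdot> idm C K"
    unfolding d_def
    using comp_add_right[OF k(2) idm_in_hom neg_in_hom[OF j\<sigma>]] neg_comp[OF k(2) j\<sigma>]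
      kernel_comp[OF k(1) \<sigma>] add_zero[OF k(2)] k(2) \<sigma> j objs
    by (simp add: hom_def)
  finally have k'k: "k' \<cdot> k = idm C K"
    using mono_cancel[OF kernel_mono[OF k(1)] k(2) comp_in_hom[OF k(2) k'] idm_in_hom] objs by blast
  have "k \<cdot> k' \<cdot> j = d \<cdot> j" using comp_reassoc[OF kk' k' k(2)] j by (simp add: hom_def)
  also have "\<dots> = zero C B A"
    unfolding d_def
    using comp_add_right[OF j idm_in_hom neg_in_hom[OF j\<sigma>]] neg_comp[OF j j\<sigma>] add_neg[OF j] \<sigma> j \<sigma>j objs
    by (simp add: hom_def)
  finally have k'j: "k' \<cdot> j = zero C B K"
    using mono_comp_eq_zero[OF kernel_mono[OF k(1)] k(2) comp_in_hom[OF j k']] by blast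
  have "add C (k \<cdot> k') (j \<cdot> \<sigma>) = add C (idm C A) (add C (neg C (j \<cdot> \<sigma>)) (j \<cdot> \<sigma>))"
    unfolding kk' d_def using add_assoc[OF idm_in_hom neg_in_hom[OF j\<sigma>] j\<sigma>] objs by simp
  also have "\<dots> = idm C A" using neg_add[OF j\<sigma>] add_zero[OF idm_in_hom] objs by simp
  finally show ?thesis using that k' k'k k'j by blast
qed

lemma intertwine_complementary_sums:
  assumes r: "r \<in> hom C M M'"
    and a: "a \<in> hom C M M" and b: "b \<in> hom C M M" and ab: "add C a b = idm C M"
    and a': "a' \<in> hom C M' M'" and b': "b' \<in> hom C M' M'" and ab': "add C a' b' = idm C M'"
    and b'r: "b' \<cdot> r = r \<cdot> a"
  shows "a' \<cdot> r = r \<cdot> b"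
proof (rule add_right_cancel)
  have "add C (a' \<cdot> r) (r \<cdot> a) = r"
    using comp_add_right[OF r a' b'] ab' b'r r by (simp add: hom_def)
  also have "\<dots> = add C (r \<cdot> a) (r \<cdot> b)" using comp_add_left[OF a b r] ab r by (simp add: hom_def)
  also have "\<dots> = add C (r \<cdot> b) (r \<cdot> a)" using add_comm comp_in_hom a b r by blast
  finally show "add C (a' \<cdot> r) (r \<cdot> a) = add C (r \<cdot> b) (r \<cdot> a)" .
qed (use comp_in_hom r a a' b in blast)+

lemma fully_invariant_kernelI:
  assumes k: "is_kernel C k \<sigma>" and \<sigma>: "\<sigma> \<in> hom C A B"
    and kills: "\<And>h. h \<in> hom C A A \<Longrightarrow> \<sigma> \<cdot> h \<cdot> k = zero C (dom C k) B"
  shows "fully_invariant C k"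
  unfolding fully_invariant_def
proof (intro conjI ballI kernel_mono[OF k])
  fix h assume "h \<in> hom C (cod C k) (cod C k)"
  then have h: "h \<in> hom C A A" using kernelD[OF k] \<sigma> by (simp add: hom_def)
  have kh: "k \<in> hom C (dom C k) A" using kernel_in_hom[OF k \<sigma>] .
  obtain \<alpha> where "\<alpha> \<in> hom C (dom C k) (dom C k)" "k \<cdot> \<alpha> = h \<cdot> k"
    using kernel_factor[OF k \<sigma> kh comp_in_hom[OF kh h] kills[OF h]] by blast
  then show "\<exists>\<alpha> \<in> hom C (dom C k) (dom C k). h \<cdot> k = k \<cdot> \<alpha>" by metis
qed

lemma hom_to_complement_of_fully_invariant_summand_eq_zero:
  assumes k: "fully_invariant C k" "k \<in> hom C K M" and p: "p \<in> hom C M K" "p \<cdot> k = idm C K"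
    and l: "l \<in> hom C L M" and \<pi>: "\<pi> \<in> hom C M L" "\<pi> \<cdot> l = idm C L" "\<pi> \<cdot> k = zero C K L"
    and \<beta>: "\<beta> \<in> hom C K L"
  shows "\<beta> = zero C K L"
proof -
  have "l \<cdot> \<beta> \<cdot> p \<in> hom C (cod C k) (cod C k)"
    using k(2) l \<beta> p(1) by (simp add: hom_def)
  then obtain \<alpha> where \<alpha>: "\<alpha> \<in> hom C K K" and "(l \<cdot> \<beta> \<cdot> p) \<cdot> k = k \<cdot> \<alpha>"
    using k unfolding fully_invariant_def hom_def by auto
  then have "l \<cdot> \<beta> = k \<cdot> \<alpha>"
    using k(2) l \<beta> p by (simp add: hom_def)
  then have "\<pi> \<cdot> l \<cdot> \<beta> = \<pi> \<cdot> k \<cdot> \<alpha>" by simp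
  then show ?thesis
    using comp_reassoc[OF \<pi>(2) l \<pi>(1)] comp_reassoc[OF \<pi>(3) k(2) \<pi>(1)] \<alpha> \<beta> hom_objs[OF \<beta>]
    by (simp add: hom_def)
qed

lemma kernel_complement_comp_mono:
  assumes k: "is_kernel C k g" "g \<in> hom C M N" "k \<in> hom C K M"
    and l: "l \<in> hom C L M" and \<pi>: "\<pi> \<in> hom C M L" "\<pi> \<cdot> l = idm C L" "\<pi> \<cdot> k = zero C K L"
  shows "is_mono C (g \<cdot> l)"
proof (rule mono_if_zero_kernel[OF comp_in_hom[OF l k(2)]])
  fix X z assume z: "z \<in> hom C X L" and "(g \<cdot> l) \<cdot> z = zero C X N"
  then have "g \<cdot> l \<cdot> z = zero C X N" using k(2) l by (simp add: hom_def)
  then obtain v where v: "v \<in> hom C X K" and kv: "k \<cdot> v = l \<cdot> z"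
    using kernel_factor[OF k comp_in_hom[OF z l]] by blast
  have "z = \<pi> \<cdot> l \<cdot> z" using comp_reassoc[OF \<pi>(2) l \<pi>(1)] z by (simp add: hom_def)
  also have "\<dots> = \<pi> \<cdot> k \<cdot> v" using kv by simp
  also have "\<dots> = zero C X L"
    using comp_reassoc[OF \<pi>(3) k(3) \<pi>(1)] v hom_objs[OF v] hom_objs[OF l] by (simp add: hom_def)
  finally show "z = zero C X L" .
qed

lemma kernel_comp_epi_complement:
  assumes r: "r \<in> hom C M M'" "is_epi C r" and f: "f \<in> hom C M' N'"
    and k0: "is_kernel C k0 (f \<cdot> r)" "k0 \<in> hom C K M" and p: "p \<in> hom C M K" "p \<cdot> k0 = idm C K"
  obtains L l \<pi> \<sigma> where "l \<in> hom C L M" "\<pi> \<in> hom C M L" "\<sigma> \<in> hom C M' L"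
    "\<pi> \<cdot> l = idm C L" "\<pi> \<cdot> k0 = zero C K L" "add C (l \<cdot> \<pi>) (k0 \<cdot> p) = idm C M"
    "\<sigma> \<cdot> r = \<pi>" "is_mono C (f \<cdot> r \<cdot> l)" "f = (f \<cdot> r \<cdot> l) \<cdot> \<sigma>"
proof -
  have fr: "f \<cdot> r \<in> hom C M N'" using comp_in_hom r(1) f by blast
  have objs: "M \<in> Obj C" "M' \<in> Obj C" "N' \<in> Obj C" "K \<in> Obj C"
    using hom_objs r(1) f k0(2) by blast+
  obtain l where ll: "is_kernel C l p" using kernel_exists p(1) by (auto simp: hom_def)
  define L where "L = dom C l"
  have l: "l \<in> hom C L M" using kernel_in_hom[OF ll p(1)] L_def by simp
  obtain \<pi> where \<pi>: "\<pi> \<in> hom C M L" "\<pi> \<cdot> l = idm C L" "\<pi> \<cdot> k0 = zero C K L"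
    and sum: "add C (l \<cdot> \<pi>) (k0 \<cdot> p) = idm C M"
    using kernel_of_retraction_complement[OF p(1) k0(2) p(2) ll l] by blast
  obtain t where t: "is_cokernel C r t" using epi_is_cokernel r(2) by blast
  define T where "T = dom C t"
  have th: "t \<in> hom C T M" and rt: "r \<cdot> t = zero C T M'"
    using cokernelD[OF t] r(1) unfolding T_def hom_def by auto
  have "(f \<cdot> r) \<cdot> t = zero C T N'" using rt r(1) f th hom_objs[OF th] by (simp add: hom_def)
  then obtain w where w: "w \<in> hom C T K" "k0 \<cdot> w = t" using kernel_factor[OF k0(1) fr k0(2) th] by blast
  have "\<pi> \<cdot> t = \<pi> \<cdot> k0 \<cdot> w" using w(2) by simp
  also have "\<dots> = zero C T L"
    using comp_reassoc[OF \<pi>(3) k0(2) \<pi>(1)] w(1) hom_objs[OF w(1)] hom_objs[OF l] by (simp add: hom_def)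
  txt \<open>\<open>ker r \<subseteq> K\<close>, so the projection onto the complement \<open>L\<close> descends along \<open>r\<close>.\<close>
  finally obtain \<sigma> where \<sigma>: "\<sigma> \<in> hom C M' L" "\<sigma> \<cdot> r = \<pi>"
    using cokernel_factor[OF t th r(1) \<pi>(1)] by blast
  have frl: "f \<cdot> r \<cdot> l \<in> hom C L N'" using r(1) f l by (simp add: hom_def)
  have mono: "is_mono C (f \<cdot> r \<cdot> l)"
    using kernel_complement_comp_mono[OF k0(1) fr k0(2) l \<pi>] r(1) f l by (simp add: hom_def)
  have "f = (f \<cdot> r \<cdot> l) \<cdot> \<sigma>"
  proof (rule epi_cancel[OF r(2) r(1) f comp_in_hom[OF \<sigma>(1) frl]])
    have "f \<cdot> r \<cdot> k0 \<cdot> p = ((f \<cdot> r) \<cdot> k0) \<cdot> p" using r(1) f k0(2) p(1) by (simp add: hom_def)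
    then have frk0p: "f \<cdot> r \<cdot> k0 \<cdot> p = zero C M N'"
      using kernel_comp[OF k0(1) fr] k0(2) p(1) objs by (simp add: hom_def)
    have "f \<cdot> r = f \<cdot> r \<cdot> add C (l \<cdot> \<pi>) (k0 \<cdot> p)" using sum r(1) f by (simp add: hom_def)
    also have "\<dots> = add C (f \<cdot> r \<cdot> l \<cdot> \<pi>) (f \<cdot> r \<cdot> k0 \<cdot> p)"
      using comp_add_left[OF comp_in_hom[OF \<pi>(1) l] comp_in_hom[OF p(1) k0(2)] fr] r(1) f l \<pi>(1) k0(2) p(1)
      by (simp add: hom_def)
    also have "\<dots> = f \<cdot> r \<cdot> l \<cdot> \<pi>"
      using frk0p add_zero[OF comp_in_hom[OF \<pi>(1) frl]] r(1) f l \<pi>(1) by (simp add: hom_def)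
    finally show "f \<cdot> r = ((f \<cdot> r \<cdot> l) \<cdot> \<sigma>) \<cdot> r" using \<sigma> r(1) f l by (simp add: hom_def)
  qed
  then show ?thesis using that[OF l \<pi>(1) \<sigma>(1) \<pi>(2,3) sum \<sigma>(2) mono] by blast
qed

lemma fully_invariant_section_kernel_descends:
  assumes r: "r \<in> hom C M M'" "is_epi C r" and f: "f \<in> hom C M' N'"
    and k0: "is_kernel C k0 (f \<cdot> r)" "is_section C k0" "fully_invariant C k0"
    and k: "is_kernel C k f"
  shows "is_section C k \<and> fully_invariant C k"
proof -
  define K where "K = dom C k0"
  define K' where "K' = dom C k"
  have fr: "f \<cdot> r \<in> hom C M N'" using comp_in_hom r(1) f by blast
  have k0h: "k0 \<in> hom C K M" using kernel_in_hom[OF k0(1) fr] K_def by simp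
  have kh: "k \<in> hom C K' M'" using kernel_in_hom[OF k f] K'_def by simp
  obtain p where p: "p \<in> hom C M K" "p \<cdot> k0 = idm C K"
    using k0(2) k0h unfolding is_section_def hom_def by auto
  obtain L l \<pi> \<sigma> where l: "l \<in> hom C L M" and \<pi>: "\<pi> \<in> hom C M L" "\<pi> \<cdot> l = idm C L" "\<pi> \<cdot> k0 = zero C K L"
    and \<sigma>: "\<sigma> \<in> hom C M' L" "\<sigma> \<cdot> r = \<pi>" and sum: "add C (l \<cdot> \<pi>) (k0 \<cdot> p) = idm C M"
    and mono: "is_mono C (f \<cdot> r \<cdot> l)" and f_factor: "f = (f \<cdot> r \<cdot> l) \<cdot> \<sigma>"
    using kernel_comp_epi_complement[OF r f k0(1) k0h p] by metis
  have objs: "M \<in> Obj C" "M' \<in> Obj C" "L \<in> Obj C" "K \<in> Obj C" "K' \<in> Obj C"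
    using hom_objs r(1) l k0h kh by blast+
  have k\<sigma>: "is_kernel C k \<sigma>"
    using k kernel_comp_mono_iff[OF mono _ \<sigma>(1)] f_factor r(1) f l by (simp add: hom_def)
  have rl: "r \<cdot> l \<in> hom C L M'" using comp_in_hom l r(1) by blast
  have "\<sigma> \<cdot> r \<cdot> l = idm C L" using comp_reassoc[OF \<sigma>(2) r(1) \<sigma>(1)] \<pi>(2) l by (simp add: hom_def)
  then obtain k' where k': "k' \<in> hom C M' K'" "k' \<cdot> k = idm C K'"
    and sum': "add C (k \<cdot> k') ((r \<cdot> l) \<cdot> \<sigma>) = idm C M'"
    using kernel_of_retraction_complement[OF \<sigma>(1) rl _ k\<sigma> kh] by metis
  have "is_section C k" using k' kh unfolding is_section_def hom_def by auto
  moreover have "fully_invariant C k"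
  proof (rule fully_invariant_kernelI[OF k\<sigma> \<sigma>(1)])
    fix h assume h: "h \<in> hom C M' M'"
    have "\<sigma> \<cdot> h \<cdot> r \<cdot> k0 = zero C K L"
    proof (rule hom_to_complement_of_fully_invariant_summand_eq_zero[OF k0(3) k0h p l \<pi>])
      show "\<sigma> \<cdot> h \<cdot> r \<cdot> k0 \<in> hom C K L" using \<sigma>(1) h r(1) k0h by (simp add: hom_def)
    qed
    then have \<beta>: "\<sigma> \<cdot> h \<cdot> r \<cdot> k0 \<cdot> p = zero C M L"
      using comp_reassoc[OF _ k0h comp_in_hom[OF comp_in_hom[OF r(1) h] \<sigma>(1)], of "zero C K L"]
        p(1) \<sigma>(1) h r(1) k0h objs by (simp add: hom_def)
    have "((r \<cdot> l) \<cdot> \<sigma>) \<cdot> r = r \<cdot> l \<cdot> \<pi>" using \<sigma> r(1) l by (simp add: hom_def)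
    then have "(k \<cdot> k') \<cdot> r = r \<cdot> k0 \<cdot> p"
      using intertwine_complementary_sums[OF r(1) _ _ sum _ _ sum'] r(1) l \<pi>(1) k0h p(1) kh k'(1) \<sigma>(1)
      by (simp add: hom_def)
    then have "(\<sigma> \<cdot> h \<cdot> k \<cdot> k') \<cdot> r = zero C M' L \<cdot> r"
      using \<beta> \<sigma>(1) h kh k'(1) r(1) objs by (simp add: hom_def)
    then have "\<sigma> \<cdot> h \<cdot> k \<cdot> k' = zero C M' L"
      using epi_cancel[OF r(2) r(1)] \<sigma>(1) h kh k'(1) objs by (simp add: hom_def)
    then have "(\<sigma> \<cdot> h \<cdot> k \<cdot> k') \<cdot> k = zero C K' L"
      using kh objs by (simp add: hom_def)
    then show "\<sigma> \<cdot> h \<cdot> k = zero C (dom C k) L"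
      using k'(2) \<sigma>(1) h kh k'(1) K'_def by (simp add: hom_def)
  qed
  ultimately show ?thesis ..
qed

lemma strongly_rickart_mono_codomain:
  assumes s: "s \<in> hom C N' N" "is_mono C s" and rickart: "strongly_rickart C M N"
  shows "strongly_rickart C M N'"
  unfolding strongly_rickart_def
proof (intro ballI allI impI)
  fix f k assume f: "f \<in> hom C M N'" and "is_kernel C k f"
  then have "is_kernel C k (s \<cdot> f)" using kernel_comp_mono_iff[OF s(2,1) f] by blast
  then show "is_section C k \<and> fully_invariant C k"
    using rickart comp_in_hom[OF f s(1)] unfolding strongly_rickart_def by blast
qed

lemma strongly_rickart_epi_domain:
  assumes r: "r \<in> hom C M M'" "is_epi C r" and rickart: "strongly_rickart C M N'"
  shows "strongly_rickart C M' N'"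
  unfolding strongly_rickart_def
proof (intro ballI allI impI)
  fix f k assume f: "f \<in> hom C M' N'" and k: "is_kernel C k f"
  have fr: "f \<cdot> r \<in> hom C M N'" using comp_in_hom r(1) f by blast
  then obtain k0 where k0: "is_kernel C k0 (f \<cdot> r)" using kernel_exists by (auto simp: hom_def)
  then have "is_section C k0" "fully_invariant C k0"
    using rickart fr unfolding strongly_rickart_def by blast+
  then show "is_section C k \<and> fully_invariant C k"
    using fully_invariant_section_kernel_descends[OF r f k0] k by blast
qed

lemma strongly_rickart_epi_mono:
  assumes "r \<in> hom C M M'" "is_epi C r" "s \<in> hom C N' N" "is_mono C s"
    and "strongly_rickart C M N"
  shows "strongly_rickart C M' N'"
  using strongly_rickart_epi_domain[OF assms(1,2) strongly_rickart_mono_codomain[OF assms(3-5)]] .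

end

section \<open>The opposite category\<close>

definition opposite :: "('o, 'm) acat \<Rightarrow> ('o, 'm) acat" where
  "opposite C = C\<lparr>dom := cod C, cod := dom C, comp := (\<lambda>g f. comp C f g), zero := (\<lambda>a b. zero C b a)\<rparr>"

lemma opposite_simps [simp]:
  "Obj (opposite C) = Obj C" "Mor (opposite C) = Mor C" "dom (opposite C) = cod C"
  "cod (opposite C) = dom C" "idm (opposite C) = idm C" "comp (opposite C) g f = comp C f g"
  "add (opposite C) = add C" "neg (opposite C) = neg C" "zero (opposite C) a b = zero C b a"
  by (simp_all add: opposite_def)

lemma hom_opposite [simp]: "hom (opposite C) a b = hom C b a"
  by (auto simp: hom_def)

lemma is_mono_opposite [simp]: "is_mono (opposite C) m = is_epi C m"
  and is_epi_opposite [simp]: "is_epi (opposite C) m = is_mono C m"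
  unfolding is_mono_def is_epi_def by auto

lemma is_kernel_opposite [simp]: "is_kernel (opposite C) k f = is_cokernel C k f"
  and is_cokernel_opposite [simp]: "is_cokernel (opposite C) k f = is_kernel C k f"
  unfolding is_kernel_def is_cokernel_def by simp_all

lemma strongly_rickart_opposite:
  "strongly_rickart (opposite C) N M = dual_strongly_rickart C M N"
  unfolding strongly_rickart_def dual_strongly_rickart_def is_section_def is_retraction_def
    fully_invariant_def fully_coinvariant_def
  by simp

lemma category_opposite: "category C \<Longrightarrow> category (opposite C)"
  unfolding category_def by (auto simp: hom_def)

lemma preadditive_opposite:
  assumes "preadditive C" shows "preadditive (opposite C)"
proof -
  note P = assms[unfolded preadditive_def]
  note group = P[THEN conjunct1, rule_format]
  note laws = group[THEN conjunct1] group[THEN conjunct2, THEN conjunct1, rule_format]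
    group[THEN conjunct2, THEN conjunct2, THEN conjunct1, rule_format]
    group[THEN conjunct2, THEN conjunct2, THEN conjunct2, THEN conjunct1, rule_format]
    group[THEN conjunct2, THEN conjunct2, THEN conjunct2, THEN conjunct2, THEN conjunct1, rule_format]
    group[THEN conjunct2, THEN conjunct2, THEN conjunct2, THEN conjunct2, THEN conjunct2, THEN conjunct1, rule_format]
    group[THEN conjunct2, THEN conjunct2, THEN conjunct2, THEN conjunct2, THEN conjunct2, THEN conjunct2, rule_format]
    P[THEN conjunct2, THEN conjunct1, rule_format] P[THEN conjunct2, THEN conjunct2, rule_format]
  show ?thesis
    unfolding preadditive_def opposite_simps hom_opposite
    by (intro conjI ballI) (rule laws; assumption)+
qed

lemma abelian_preadditive_kernels_normal_epis:
  assumes "abelian C"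
  shows "preadditive_kernels_normal_epis C"
    and "preadditive_kernels_normal_epis (opposite C)"
  using assms unfolding abelian_def
  by (unfold_locales; simp add: category_opposite preadditive_opposite)+

theorem theorem2p17:
  fixes C :: "('o, 'm) acat"
  assumes "abelian C"
    and "M \<in> Obj C" and "M' \<in> Obj C" and "N \<in> Obj C" and "N' \<in> Obj C"
    and "r \<in> hom C M M'" and "is_epi C r"
    and "s \<in> hom C N' N" and "is_mono C s"
  shows "(strongly_rickart C M N \<longrightarrow> strongly_rickart C M' N') \<and>
         (dual_strongly_rickart C M N \<longrightarrow> dual_strongly_rickart C M' N')"
proof (intro conjI impI)
  note C = abelian_preadditive_kernels_normal_epis[OF assms(1)]
  show "strongly_rickart C M' N'" if "strongly_rickart C M N"
    using preadditive_kernels_normal_epis.strongly_rickart_epi_mono[OF C(1) assms(6-9) that] .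
  show "dual_strongly_rickart C M' N'" if "dual_strongly_rickart C M N"
    using preadditive_kernels_normal_epis.strongly_rickart_epi_mono[OF C(2), of s N N' r M' M]
      that assms(6-9) by (simp add: strongly_rickart_opposite[symmetric])
qed

end
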